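(* Let $\mathcal{G}=(\mathcal{V},E)$ be an undirected graph with $\mathcal{V}=\{1,\dots,N\}$ and set of cliques $\mathcal{C}$. For each $i\in\mathcal{V}$ let $\mathcal{X}_i$ be a finite alphabet and $g_i:\mathcal{X}_i\to\mathcal{Y}_i$ a function. Let $X=(X_1,\dots,X_N)$ be a random variable on $\mathcal{X}=\prod_i\mathcal{X}_i$ with $p_X(x)>0$ for all $x\in\mathcal{X}$, and suppose there is a family of potential functions $\{\psi_C,\ C\in\mathcal{C}\}$, $\psi_C:\mathcal{X}_C\to\mathbb{R}$, with $$p_X(x)=\frac{1}{Z}\prod_{C\in\mathcal{C}}\psi_C(x)\ \text{ for all } x\in\mathcal{X},\qquad Z=\sum_{x\in\mathcal{X}}\prod_{C\in\mathcal{C}}\psi_C(x).$$ Let $Y=(g_1(X_1),\dots,g_N(X_N))=g(X)$. Assume that for every $i\in\mathcal{V}$ there is at most one clique $C\ni i$ such that $\psi_C$ strictly depends on $x_i$. For each $i$ let $C'(i)$ be that clique (or, if no potential strictly depends on $x_i$, an arbitrary clique containing $i$), and let $\mathcal{V}_1,\dots,\mathcal{V}_L$ be the partition of $\mathcal{V}$ into classes of vertices having the same $C'(i)$; write $C'(\mathcal{V}_\ell)$ for the common clique of class $\mathcal{V}_\ell$. Then $Y$ is a Markov random field on $\mathcal{G}$. Moreover, $p_Y(y)=\frac{1}{Z}\prod_{C\in\mathcal{C}}U_C(y)$ for all $y$ in the image of $g$, where the functions $U_C$ are defined by $$U_{C'(\mathcal{V}_\ell)}(g(x))=\sum_{x'_{\mathcal{V}_\ell}\in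 g_{\mathcal{V}_\ell}^{-1}(g_{\mathcal{V}_\ell}(x_{\mathcal{V}_\ell}))}\psi_{C'(\mathcal{V}_\ell)}(x'_{\mathcal{V}_\ell},x_{\mathcal{V}\setminus\mathcal{V}_\ell}),\quad \ell=1,\dots,L,$$ and $U_C(g(x))=\psi_C(x)$ for all $C\in\mathcal{C}\setminus\bigcup_{j\in\mathcal{V}}\{C'(j)\}$ (these definitions are well posed, i.e., the right-hand sides depend on $x$ only through $g(x)$).
   Context: A clique is a singleton or a set $C\subseteq\mathcal{V}$ with all pairs of its elements joined by edges. For $A\subseteq\mathcal{V}$, $x_A=(x_i,i\in A)$, $\mathcal{X}_A=\prod_{i\in A}\mathcal{X}_i$, $g_A(x_A)=(g_i(x_i),i\in A)$; a potential $\psi_A$ on $\mathcal{X}_A$ is regarded as a function on $\mathcal{X}$ via $\psi_A(x)=\psi_A(x_A)$. $X$ is a Markov random field (MRF) on $\mathcal{G}$ if for every $i$, $p_{X_i|X_{\mathcal{V}\setminus\{i\}}}=p_{X_i|X_{\mathcal{N}_i}}$, where $\mathcal{N}_i$ is the set of neighbors of $i$. For a clique $C$ containing $i$, $\psi_C$ depends on $x_i$ only via $y_i=g_i(x_i)$ if $\psi_C(x_{\mathcal{V}\setminus\{i\}},x_i)=\psi_C(x_{\mathcal{V}\setminus\{i\}},x_i')$ for all $x_{\mathcal{V}\setminus\{i\}}$ and all $x_i,x_i'$ with $g_i(x_i)=g_i(x_i')$; otherwise $\psi_C$ strictly depends on $x_i$. *)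

theory Defs
  imports Complex_Main
begin

text \<open>Vertices are the elements of a finite type 'v (so V = UNIV, N = CARD('v)).
  The graph is given by a symmetric irreflexive edge relation E.\<close>

definition is_clique :: "('v \<Rightarrow> 'v \<Rightarrow> bool) \<Rightarrow> 'v set \<Rightarrow> bool" where
  "is_clique E C \<longleftrightarrow> C \<noteq> {} \<and> (\<forall>i\<in>C. \<forall>j\<in>C. i \<noteq> j \<longrightarrow> E i j)"

definition cliques :: "('v \<Rightarrow> 'v \<Rightarrow> bool) \<Rightarrow> 'v set set" where
  "cliques E = {C. is_clique E C}"

definition configs :: "('v \<Rightarrow> 'a set) \<Rightarrow> ('v \<Rightarrow> 'a) set" where
  "configs Xs = {x. \<forall>i. x i \<in> Xs i}"

definition gmap :: "('v \<Rightarrow> 'a \<Rightarrow> 'b) \<Rightarrow> ('v \<Rightarrow> 'a) \<Rightarrow> ('v \<Rightarrow> 'b)" where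
  "gmap g x = (\<lambda>i. g i (x i))"

definition depends_only_via ::
  "('v \<Rightarrow> 'a set) \<Rightarrow> ('v \<Rightarrow> 'a \<Rightarrow> 'b) \<Rightarrow> (('v \<Rightarrow> 'a) \<Rightarrow> real) \<Rightarrow> 'v \<Rightarrow> bool" where
  "depends_only_via Xs g psi i \<longleftrightarrow>
     (\<forall>x\<in>configs Xs. \<forall>a\<in>Xs i. \<forall>a'\<in>Xs i. g i a = g i a' \<longrightarrow> psi (x(i := a)) = psi (x(i := a')))"

definition strictly_depends ::
  "('v \<Rightarrow> 'a set) \<Rightarrow> ('v \<Rightarrow> 'a \<Rightarrow> 'b) \<Rightarrow> (('v \<Rightarrow> 'a) \<Rightarrow> real) \<Rightarrow> 'v \<Rightarrow> bool" where
  "strictly_depends Xs g psi i \<longleftrightarrow> \<not> depends_only_via Xs g psi i"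

text \<open>Markov random field property for a random field whose law is given by
  P :: event \<Rightarrow> probability (events are predicates on configurations):
  p(Z_i | Z_{V - {i}}) = p(Z_i | Z_{N_i}) wherever the conditioning event has positive probability.\<close>
definition is_MRF :: "('v \<Rightarrow> 'v \<Rightarrow> bool) \<Rightarrow> ((('v \<Rightarrow> 'c) \<Rightarrow> bool) \<Rightarrow> real) \<Rightarrow> bool" where
  "is_MRF E P \<longleftrightarrow>
     (\<forall>i y. P (\<lambda>z. \<forall>j. j \<noteq> i \<longrightarrow> z j = y j) > 0 \<longrightarrow>
        P (\<lambda>z. z i = y i \<and> (\<forall>j. j \<noteq> i \<longrightarrow> z j = y j)) / P (\<lambda>z. \<forall>j. j \<noteq> i \<longrightarrow> z j = y j)
      = P (\<lambda>z. z i = y i \<and> (\<forall>j. E i j \<longrightarrow> z j = y j)) / P (\<lambda>z. \<forall>j. E i j \<longrightarrow> z j = y j))"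

definition law_Y :: "('v \<Rightarrow> 'a set) \<Rightarrow> ('v \<Rightarrow> 'a \<Rightarrow> 'b) \<Rightarrow> (('v \<Rightarrow> 'a) \<Rightarrow> real)
    \<Rightarrow> (('v \<Rightarrow> 'b) \<Rightarrow> bool) \<Rightarrow> real" where
  "law_Y Xs g p A = (\<Sum>x\<in>configs Xs. if A (gmap g x) then p x else 0)"

definition pmf_Y :: "('v \<Rightarrow> 'a set) \<Rightarrow> ('v \<Rightarrow> 'a \<Rightarrow> 'b) \<Rightarrow> (('v \<Rightarrow> 'a) \<Rightarrow> real)
    \<Rightarrow> ('v \<Rightarrow> 'b) \<Rightarrow> real" where
  "pmf_Y Xs g p y = law_Y Xs g p (\<lambda>z. z = y)"

end

(* Summing the Gibbs factorisation of p_X over a fibre of g: a potential psi_C with C not of the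
   form C'(i) sees every coordinate only through g, so it is constant on the fibre; for a
   class V_l the potential psi_{C'(V_l)} sees the coordinates outside V_l only through g as well.
   The fibre is the product, over the classes, of the sets of admissible modifications on each
   class, so by distributivity the fibre sum is the product of the class sums U_{C'(V_l)} and
   of the remaining potentials: p_Y is a strictly positive Gibbs distribution whose potentials
   are local on the cliques. Such a distribution is Markov: conditioning y_i on all other
   coordinates or only on its neighbours gives the same ratio, because the factors of the
   cliques not containing i cancel in both. *)

theory Submission
  imports Defs "HOL-Library.FuncSet"
begin

section \<open>Configurations and the law of g(X)\<close>

lemma configs_eq_PiE: "configs Xs = PiE UNIV Xs"
  by (auto simp: configs_def PiE_def extensional_def)

lemma finite_configs: "(\<And>i. finite (Xs i)) \<Longrightarrow> finite (configs (Xs :: 'v::finite \<Rightarrow> 'a set))"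
  by (simp add: configs_eq_PiE finite_PiE)

lemma configs_upd: "x \<in> configs Xs \<Longrightarrow> a \<in> Xs j \<Longrightarrow> x(j := a) \<in> configs Xs"
  by (simp add: configs_def)

lemma eq_if_coordinatewise_invariant:
  fixes f :: "('v::finite \<Rightarrow> 'a) \<Rightarrow> 'c"
  assumes x: "x \<in> configs Xs" and x': "x' \<in> configs Xs"
    and invariant: "\<And>j w a a'. w \<in> configs Xs \<Longrightarrow> a \<in> Xs j \<Longrightarrow> a' \<in> Xs j \<Longrightarrow> R j a a' \<Longrightarrow>
                      f (w(j := a)) = f (w(j := a'))"
    and related: "\<And>j. x j \<noteq> x' j \<Longrightarrow> R j (x j) (x' j)"
  shows "f x = f x'"
proof -
  have "f w = f x'"
    if "finite D" "w \<in> configs Xs" "{j. w j \<noteq> x' j} \<subseteq> D" "\<And>j. w j \<noteq> x' j \<Longrightarrow> R j (w j) (x' j)"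
    for D w
    using that
  proof (induction D arbitrary: w rule: finite_induct)
    case empty
    then have "w = x'" by auto
    then show ?case by simp
  next
    case (insert k D)
    have wk: "w k \<in> Xs k" and x'k: "x' k \<in> Xs k"
      using insert.prems(1) x' by (auto simp: configs_def)
    have "f (w(k := x' k)) = f x'"
    proof (rule insert.IH)
      show "w(k := x' k) \<in> configs Xs" using insert.prems(1) x'k by (rule configs_upd)
    qed (use insert.prems in auto)
    moreover have "f w = f (w(k := x' k))"
    proof (cases "w k = x' k")
      case False
      then show ?thesis
        using invariant[OF insert.prems(1) wk x'k] insert.prems(3) by simp
    qed (metis fun_upd_idem)
    ultimately show ?case by simp
  qed
  from this[of UNIV x] show ?thesis using x related by simp
qed

lemma gmap_image_configs: "gmap g ` configs Xs = configs (\<lambda>j. g j ` Xs j)"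
proof
  show "gmap g ` configs Xs \<subseteq> configs (\<lambda>j. g j ` Xs j)" by (auto simp: configs_def gmap_def)
next
  show "configs (\<lambda>j. g j ` Xs j) \<subseteq> gmap g ` configs Xs"
  proof
    fix y assume y: "y \<in> configs (\<lambda>j. g j ` Xs j)"
    define x where "x j = (SOME a. a \<in> Xs j \<and> g j a = y j)" for j
    have "x j \<in> Xs j \<and> g j (x j) = y j" for j
      unfolding x_def by (rule someI_ex) (use y in \<open>force simp: configs_def\<close>)
    then have "x \<in> configs Xs" "gmap g x = y" by (auto simp: configs_def gmap_def)
    then show "y \<in> gmap g ` configs Xs" by blast
  qed
qed

lemma pmf_Y_eq_sum: "finite (configs Xs) \<Longrightarrow> pmf_Y Xs g p y = sum p {x \<in> configs Xs. gmap g x = y}"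
  unfolding pmf_Y_def law_Y_def by (simp add: sum.inter_filter)

lemma pmf_Y_pos:
  assumes "finite (configs Xs)" and "\<And>x. x \<in> configs Xs \<Longrightarrow> p x > 0" and "y \<in> gmap g ` configs Xs"
  shows "pmf_Y Xs g p y > 0"
proof -
  obtain x where "x \<in> configs Xs" "gmap g x = y" using assms(3) by blast
  then show ?thesis
    unfolding pmf_Y_eq_sum[OF assms(1)] using assms(1,2) by (intro sum_pos2[of _ x]) (auto intro: less_imp_le)
qed

lemma law_Y_eq_sum_pmf_Y:
  assumes fin: "finite (configs Xs)"
  shows "law_Y Xs g p P = sum (pmf_Y Xs g p) {y \<in> gmap g ` configs Xs. P y}"
proof -
  have "law_Y Xs g p P
      = (\<Sum>y\<in>gmap g ` configs Xs. \<Sum>x\<in>{x. x \<in> configs Xs \<and> gmap g x = y}. if P (gmap g x) then p x else 0)"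
    unfolding law_Y_def by (rule sum.image_gen[OF fin])
  also have "\<dots> = (\<Sum>y\<in>gmap g ` configs Xs. if P y then pmf_Y Xs g p y else 0)"
    by (rule sum.cong[OF refl]) (simp add: pmf_Y_eq_sum[OF fin] sum.neutral)
  also have "\<dots> = sum (pmf_Y Xs g p) {y \<in> gmap g ` configs Xs. P y}"
    using fin by (simp add: sum.inter_filter)
  finally show ?thesis .
qed

section \<open>Strictly positive Gibbs fields are Markov\<close>

lemma sum_slice_eq_if_indep:
  fixes B :: "('v \<Rightarrow> 'b) \<Rightarrow> 'c::comm_monoid_add"
  assumes i: "i \<notin> J" and a: "a \<in> Ys i" and a': "a' \<in> Ys i"
    and B_indep: "\<And>z z'. z \<in> configs Ys \<Longrightarrow> z' \<in> configs Ys \<Longrightarrow>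
                    (\<forall>j. j \<noteq> i \<longrightarrow> z j = z' j) \<Longrightarrow> B z = B z'"
  shows "sum B {z \<in> configs Ys. z i = a \<and> (\<forall>j\<in>J. z j = y j)}
       = sum B {z \<in> configs Ys. z i = a' \<and> (\<forall>j\<in>J. z j = y j)}"
proof -
  define slice where "slice b = {z \<in> configs Ys. z i = b \<and> (\<forall>j\<in>J. z j = y j)}" for b
  have move: "z(i := c) \<in> slice c" if "z \<in> slice b" "c \<in> Ys i" for z b c
    using that i by (simp add: slice_def configs_upd)
  have restore: "(z(i := c))(i := b) = z" if "z \<in> slice b" for z b c
    using that by (auto simp: slice_def)
  have B_move: "B (z(i := a')) = B z" if "z \<in> slice a" for z
  proof -
    have z: "z \<in> configs Ys" using that by (simp add: slice_def)
    show ?thesis by (rule B_indep[OF configs_upd[OF z a'] z]) simp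
  qed
  have "sum B (slice a) = sum B (slice a')"
  proof (rule sum.reindex_bij_witness[where i = "\<lambda>z. z(i := a)" and j = "\<lambda>z. z(i := a')"])
    fix z assume z: "z \<in> slice a"
    show "(z(i := a'))(i := a) = z" using z by (rule restore)
    show "z(i := a') \<in> slice a'" using z a' by (rule move)
    show "B (z(i := a')) = B z" using z by (rule B_move)
  next
    fix z assume z: "z \<in> slice a'"
    show "(z(i := a))(i := a') = z" using z by (rule restore)
    show "z(i := a) \<in> slice a" using z a by (rule move)
  qed
  then show ?thesis by (simp only: slice_def)
qed

lemma sum_slice_factor:
  fixes q A B :: "('v \<Rightarrow> 'b) \<Rightarrow> real"
  assumes i: "i \<notin> J"
    and y: "\<And>j. j \<noteq> i \<Longrightarrow> y j \<in> Ys j"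
    and factor: "\<And>z. z \<in> configs Ys \<Longrightarrow> q z = A z * B z"
    and A_local: "\<And>z z'. z \<in> configs Ys \<Longrightarrow> z' \<in> configs Ys \<Longrightarrow> z i = z' i \<Longrightarrow>
                    (\<forall>j\<in>J. z j = z' j) \<Longrightarrow> A z = A z'"
    and B_indep: "\<And>z z'. z \<in> configs Ys \<Longrightarrow> z' \<in> configs Ys \<Longrightarrow>
                    (\<forall>j. j \<noteq> i \<longrightarrow> z j = z' j) \<Longrightarrow> B z = B z'"
  obtains K where "\<And>a. a \<in> Ys i \<Longrightarrow>
    sum q {z \<in> configs Ys. z i = a \<and> (\<forall>j\<in>J. z j = y j)} = A (y(i := a)) * K"
proof -
  define slice where "slice a = {z \<in> configs Ys. z i = a \<and> (\<forall>j\<in>J. z j = y j)}" for a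
  have q_slice: "sum q (slice a) = A (y(i := a)) * sum B (slice a)" if a: "a \<in> Ys i" for a
  proof -
    have y_upd: "y(i := a) \<in> configs Ys" using y a by (auto simp: configs_def)
    have "q z = A (y(i := a)) * B z" if "z \<in> slice a" for z
      using that i factor A_local[OF _ y_upd, of z] by (auto simp: slice_def)
    then show ?thesis by (simp add: sum_distrib_left)
  qed
  show ?thesis
  proof (cases "Ys i = {}")
    case True
    then show ?thesis by (intro that[of 0]) simp
  next
    case False
    then obtain a0 where a0: "a0 \<in> Ys i" by blast
    show ?thesis
    proof (rule that)
      fix a assume a: "a \<in> Ys i"
      have "sum B (slice a) = sum B (slice a0)"
        unfolding slice_def using i a a0 B_indep by (rule sum_slice_eq_if_indep)
      then show "sum q {z \<in> configs Ys. z i = a \<and> (\<forall>j\<in>J. z j = y j)} = A (y(i := a)) * sum B (slice a0)"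
        using q_slice[OF a] by (simp add: slice_def)
    qed
  qed
qed

lemma conditional_eq_factor_ratio:
  fixes q A B :: "('v::finite \<Rightarrow> 'b) \<Rightarrow> real"
  assumes fin: "\<And>j. finite (Ys j)"
    and i: "i \<notin> J"
    and y: "\<And>j. j \<noteq> i \<Longrightarrow> y j \<in> Ys j"
    and factor: "\<And>z. z \<in> configs Ys \<Longrightarrow> q z = A z * B z"
    and A_local: "\<And>z z'. z \<in> configs Ys \<Longrightarrow> z' \<in> configs Ys \<Longrightarrow> z i = z' i \<Longrightarrow>
                    (\<forall>j\<in>J. z j = z' j) \<Longrightarrow> A z = A z'"
    and B_indep: "\<And>z z'. z \<in> configs Ys \<Longrightarrow> z' \<in> configs Ys \<Longrightarrow>
                    (\<forall>j. j \<noteq> i \<longrightarrow> z j = z' j) \<Longrightarrow> B z = B z'"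
    and pos: "sum q {z \<in> configs Ys. \<forall>j\<in>J. z j = y j} > 0"
  shows "sum q {z \<in> configs Ys. z i = y i \<and> (\<forall>j\<in>J. z j = y j)} / sum q {z \<in> configs Ys. \<forall>j\<in>J. z j = y j}
       = (if y i \<in> Ys i then A y else 0) / (\<Sum>a\<in>Ys i. A (y(i := a)))"
proof -
  let ?S = "{z \<in> configs Ys. \<forall>j\<in>J. z j = y j}"
  obtain K where K: "\<And>a. a \<in> Ys i \<Longrightarrow>
      sum q {z \<in> configs Ys. z i = a \<and> (\<forall>j\<in>J. z j = y j)} = A (y(i := a)) * K"
    using sum_slice_factor[of i J y Ys q A B, OF i y factor A_local B_indep] by blast
  have "sum q ?S = (\<Sum>a\<in>Ys i. sum q {z. z \<in> ?S \<and> z i = a})"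
  proof (rule sum.group[symmetric])
    show "finite ?S" using finite_configs[of Ys] fin by simp
    show "(\<lambda>z. z i) ` ?S \<subseteq> Ys i" by (auto simp: configs_def)
  qed (rule fin)
  also have "\<dots> = (\<Sum>a\<in>Ys i. A (y(i := a)) * K)"
    by (rule sum.cong) (auto simp: K[symmetric] intro: arg_cong[where f = "sum q"])
  finally have whole: "sum q ?S = (\<Sum>a\<in>Ys i. A (y(i := a))) * K"
    by (simp add: sum_distrib_right)
  have part: "sum q {z \<in> configs Ys. z i = y i \<and> (\<forall>j\<in>J. z j = y j)} = (if y i \<in> Ys i then A y else 0) * K"
  proof (cases "y i \<in> Ys i")
    case True
    then show ?thesis using K[of "y i"] by simp
  next
    case False
    have "z i \<in> Ys i" if "z \<in> configs Ys" for z using that by (simp add: configs_def)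
    then have "{z \<in> configs Ys. z i = y i \<and> (\<forall>j\<in>J. z j = y j)} = {}" using False by force
    then have "sum q {z \<in> configs Ys. z i = y i \<and> (\<forall>j\<in>J. z j = y j)} = 0"
      by (simp only: sum.empty)
    with False show ?thesis by simp
  qed
  have "K \<noteq> 0" using pos whole by auto
  then show ?thesis unfolding whole part by simp
qed

lemma local_Markov_if_factor:
  fixes q A B :: "('v::finite \<Rightarrow> 'b) \<Rightarrow> real"
  assumes irrefl: "\<not> E i i"
    and fin: "\<And>j. finite (Ys j)"
    and pos: "\<And>z. z \<in> configs Ys \<Longrightarrow> q z > 0"
    and factor: "\<And>z. z \<in> configs Ys \<Longrightarrow> q z = A z * B z"
    and A_local: "\<And>z z'. z \<in> configs Ys \<Longrightarrow> z' \<in> configs Ys \<Longrightarrow> z i = z' i \<Longrightarrow>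
                    (\<forall>j. E i j \<longrightarrow> z j = z' j) \<Longrightarrow> A z = A z'"
    and B_indep: "\<And>z z'. z \<in> configs Ys \<Longrightarrow> z' \<in> configs Ys \<Longrightarrow>
                    (\<forall>j. j \<noteq> i \<longrightarrow> z j = z' j) \<Longrightarrow> B z = B z'"
    and pos_rest: "sum q {z \<in> configs Ys. \<forall>j. j \<noteq> i \<longrightarrow> z j = y j} > 0"
  shows "sum q {z \<in> configs Ys. z i = y i \<and> (\<forall>j. j \<noteq> i \<longrightarrow> z j = y j)}
           / sum q {z \<in> configs Ys. \<forall>j. j \<noteq> i \<longrightarrow> z j = y j}
       = sum q {z \<in> configs Ys. z i = y i \<and> (\<forall>j. E i j \<longrightarrow> z j = y j)}
           / sum q {z \<in> configs Ys. \<forall>j. E i j \<longrightarrow> z j = y j}"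
proof -
  let ?rest = "{z \<in> configs Ys. \<forall>j. j \<noteq> i \<longrightarrow> z j = y j}"
  let ?nbrs = "{z \<in> configs Ys. \<forall>j. E i j \<longrightarrow> z j = y j}"
  have "?rest \<noteq> {}" using pos_rest by (metis less_irrefl sum.empty)
  then obtain z0 where z0: "z0 \<in> ?rest" by blast
  have y: "y j \<in> Ys j" if "j \<noteq> i" for j
  proof -
    have "z0 j \<in> Ys j" using z0 by (simp add: configs_def)
    moreover have "z0 j = y j" using z0 that by simp
    ultimately show ?thesis by simp
  qed
  have nbr_ne: "j \<noteq> i" if "E i j" for j using irrefl that by metis
  have "finite (configs Ys)" using fin by (rule finite_configs)
  moreover have "?rest \<subseteq> ?nbrs" using nbr_ne by auto
  ultimately have "sum q ?rest \<le> sum q ?nbrs"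
    using pos by (intro sum_mono2) (auto intro: less_imp_le)
  then have pos_nbrs: "sum q ?nbrs > 0" using pos_rest by linarith
  have "sum q {z \<in> configs Ys. z i = y i \<and> (\<forall>j\<in>{j. j \<noteq> i}. z j = y j)}
        / sum q {z \<in> configs Ys. \<forall>j\<in>{j. j \<noteq> i}. z j = y j}
      = (if y i \<in> Ys i then A y else 0) / (\<Sum>a\<in>Ys i. A (y(i := a)))"
  proof (rule conditional_eq_factor_ratio[of Ys i _ y q A B])
    fix z z' assume "z \<in> configs Ys" "z' \<in> configs Ys" "z i = z' i" "\<forall>j\<in>{j. j \<noteq> i}. z j = z' j"
    then show "A z = A z'" using nbr_ne by (intro A_local) auto
  qed (fact fin y factor B_indep pos_rest | simp)+
  also have "\<dots> = sum q {z \<in> configs Ys. z i = y i \<and> (\<forall>j\<in>{j. E i j}. z j = y j)}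
        / sum q {z \<in> configs Ys. \<forall>j\<in>{j. E i j}. z j = y j}"
  proof (rule conditional_eq_factor_ratio[of Ys i _ y q A B, symmetric])
    fix z z' assume "z \<in> configs Ys" "z' \<in> configs Ys" "z i = z' i" "\<forall>j\<in>{j. E i j}. z j = z' j"
    then show "A z = A z'" by (intro A_local) auto
  qed (fact fin y factor B_indep pos_nbrs | simp add: irrefl)+
  finally show ?thesis by simp
qed

lemma gibbs_field_is_MRF:
  fixes E :: "'v::finite \<Rightarrow> 'v \<Rightarrow> bool" and Ys :: "'v \<Rightarrow> 'b set"
    and q :: "('v \<Rightarrow> 'b) \<Rightarrow> real" and U :: "'v set \<Rightarrow> ('v \<Rightarrow> 'b) \<Rightarrow> real" and Z :: real
  assumes irrefl: "\<And>i. \<not> E i i"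
    and fin: "\<And>j. finite (Ys j)"
    and pos: "\<And>z. z \<in> configs Ys \<Longrightarrow> q z > 0"
    and gibbs: "\<And>z. z \<in> configs Ys \<Longrightarrow> q z = (\<Prod>C\<in>cliques E. U C z) / Z"
    and U_local: "\<And>C z z'. C \<in> cliques E \<Longrightarrow> z \<in> configs Ys \<Longrightarrow> z' \<in> configs Ys \<Longrightarrow>
                    (\<forall>j\<in>C. z j = z' j) \<Longrightarrow> U C z = U C z'"
  shows "is_MRF E (\<lambda>P. sum q {z \<in> configs Ys. P z})"
proof -
  define A where "A i z = (\<Prod>C\<in>cliques E \<inter> {C. i \<in> C}. U C z)" for i z
  define B where "B i z = (\<Prod>C\<in>cliques E - {C. i \<in> C}. U C z) / Z" for i z
  have factor: "q z = A i z * B i z" if "z \<in> configs Ys" for i z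
    using gibbs[OF that] prod.Int_Diff[of "cliques E" "\<lambda>C. U C z" "{C. i \<in> C}"]
    by (simp add: A_def B_def)
  have A_local: "A i z = A i z'"
    if z: "z \<in> configs Ys" "z' \<in> configs Ys" and agree: "z i = z' i" "\<forall>j. E i j \<longrightarrow> z j = z' j" for i z z'
    unfolding A_def
  proof (rule prod.cong[OF refl])
    fix C assume C: "C \<in> cliques E \<inter> {C. i \<in> C}"
    have "z j = z' j" if "j \<in> C" for j
    proof -
      have "j = i \<or> E i j" using C that by (auto simp: cliques_def is_clique_def)
      then show ?thesis using agree by auto
    qed
    then show "U C z = U C z'" using U_local C z by blast
  qed
  have B_indep: "B i z = B i z'"
    if z: "z \<in> configs Ys" "z' \<in> configs Ys" and agree: "\<forall>j. j \<noteq> i \<longrightarrow> z j = z' j" for i z z'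
  proof -
    have "U C z = U C z'" if "C \<in> cliques E - {C. i \<in> C}" for C
      using U_local z agree that by (metis DiffE mem_Collect_eq)
    then show ?thesis unfolding B_def by (metis (no_types, lifting) prod.cong)
  qed
  show ?thesis
    unfolding is_MRF_def
  proof (intro allI impI)
    fix i y
    assume "sum q {z \<in> configs Ys. \<forall>j. j \<noteq> i \<longrightarrow> z j = y j} > 0"
    with irrefl fin pos factor A_local B_indep
    show "sum q {z \<in> configs Ys. z i = y i \<and> (\<forall>j. j \<noteq> i \<longrightarrow> z j = y j)}
           / sum q {z \<in> configs Ys. \<forall>j. j \<noteq> i \<longrightarrow> z j = y j}
       = sum q {z \<in> configs Ys. z i = y i \<and> (\<forall>j. E i j \<longrightarrow> z j = y j)}
           / sum q {z \<in> configs Ys. \<forall>j. E i j \<longrightarrow> z j = y j}"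
      by (rule local_Markov_if_factor[where A = "A i" and B = "B i"])
  qed
qed

section \<open>Potentials of the coarse-grained field\<close>

locale coarse_potentials =
  fixes E :: "'v::finite \<Rightarrow> 'v \<Rightarrow> bool"
    and Xs :: "'v \<Rightarrow> 'a set"
    and g :: "'v \<Rightarrow> 'a \<Rightarrow> 'b"
    and psi :: "'v set \<Rightarrow> ('v \<Rightarrow> 'a) \<Rightarrow> real"
    and Cp :: "'v \<Rightarrow> 'v set"
  assumes finite_Xs: "\<And>i. finite (Xs i)"
    and psi_local: "\<And>C x x'. C \<in> cliques E \<Longrightarrow> x \<in> configs Xs \<Longrightarrow> x' \<in> configs Xs \<Longrightarrow>
                      (\<forall>j\<in>C. x j = x' j) \<Longrightarrow> psi C x = psi C x'"
    and Cp_clique: "\<And>i. Cp i \<in> cliques E \<and> i \<in> Cp i"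
    and Cp_strict: "\<And>i C. C \<in> cliques E \<Longrightarrow> i \<in> C \<Longrightarrow> strictly_depends Xs g (psi C) i \<Longrightarrow> Cp i = C"
begin

text \<open>For C = Cp i, the classes V_l of the paper are the sets {j. Cp j = C}, and class_fibre C x is
  the range of summation g_{V_l}^{-1}(g_{V_l}(x_{V_l})) \<times> {x_{V - V_l}} of U_{C'(V_l)}.\<close>

definition class_fibre :: "'v set \<Rightarrow> ('v \<Rightarrow> 'a) \<Rightarrow> ('v \<Rightarrow> 'a) set" where
  "class_fibre C x = {x'' \<in> configs Xs. (\<forall>j. Cp j \<noteq> C \<longrightarrow> x'' j = x j) \<and>
                                       (\<forall>j. Cp j = C \<longrightarrow> g j (x'' j) = g j (x j))}"

definition class_potential :: "'v set \<Rightarrow> ('v \<Rightarrow> 'a) \<Rightarrow> real" where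
  "class_potential C x = (if C \<in> range Cp then sum (psi C) (class_fibre C x) else psi C x)"

text \<open>Any preimage of y may be chosen: by class_potential_eq below the value depends only on
  gmap g x, which is the well-posedness claim of the theorem. Off the image of g the value is junk.\<close>

definition induced_potential :: "'v set \<Rightarrow> ('v \<Rightarrow> 'b) \<Rightarrow> real" where
  "induced_potential C y = class_potential C (inv_into (configs Xs) (gmap g) y)"

definition splice :: "'v set \<Rightarrow> ('v \<Rightarrow> 'a) \<Rightarrow> ('v \<Rightarrow> 'a) \<Rightarrow> 'v \<Rightarrow> 'a" where
  "splice C u v = (\<lambda>j. if Cp j = C then v j else u j)"

lemma finite_configs_Xs: "finite (configs Xs)"
  using finite_Xs by (rule finite_configs)

lemma mem_if_Cp_eq: "Cp j = C \<Longrightarrow> j \<in> C"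
  using Cp_clique by blast

lemma psi_eq_if_coarsely_equal:
  assumes C: "C \<in> cliques E" and x: "x \<in> configs Xs" and x': "x' \<in> configs Xs"
    and coarse: "\<And>j. j \<in> C \<Longrightarrow> x j \<noteq> x' j \<Longrightarrow> Cp j \<noteq> C \<and> g j (x j) = g j (x' j)"
  shows "psi C x = psi C x'"
proof (rule eq_if_coordinatewise_invariant[OF x x', where R = "\<lambda>j a a'. j \<in> C \<longrightarrow> Cp j \<noteq> C \<and> g j a = g j a'"])
  fix j w a a'
  assume w: "w \<in> configs Xs" and a: "a \<in> Xs j" "a' \<in> Xs j" and R: "j \<in> C \<longrightarrow> Cp j \<noteq> C \<and> g j a = g j a'"
  show "psi C (w(j := a)) = psi C (w(j := a'))"
  proof (cases "j \<in> C")
    case True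
    then have "depends_only_via Xs g (psi C) j"
      using R Cp_strict[OF C] unfolding strictly_depends_def by blast
    then show ?thesis using w a R True unfolding depends_only_via_def by blast
  next
    case False
    then show ?thesis using psi_local[OF C configs_upd[OF w a(1)] configs_upd[OF w a(2)]] by simp
  qed
qed (use coarse in blast)

lemma self_mem_class_fibre: "x \<in> configs Xs \<Longrightarrow> x \<in> class_fibre C x"
  by (simp add: class_fibre_def)

lemma splice_mem_class_fibre:
  assumes "u \<in> configs Xs" and "v \<in> class_fibre C w" and "\<forall>j\<in>C. g j (u j) = g j (w j)"
  shows "splice C u v \<in> class_fibre C u"
  using assms mem_if_Cp_eq by (auto simp: splice_def class_fibre_def configs_def)

lemma psi_splice:
  assumes C: "C \<in> cliques E" and u: "u \<in> configs Xs" and v: "v \<in> class_fibre C w"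
    and uw: "\<forall>j\<in>C. g j (u j) = g j (w j)"
  shows "psi C (splice C u v) = psi C v"
proof (rule psi_eq_if_coarsely_equal[OF C])
  show "splice C u v \<in> configs Xs"
    using splice_mem_class_fibre[OF u v uw] by (simp add: class_fibre_def)
  show "v \<in> configs Xs" using v by (simp add: class_fibre_def)
  fix j assume "j \<in> C" "splice C u v j \<noteq> v j"
  then show "Cp j \<noteq> C \<and> g j (splice C u v j) = g j (v j)"
    using v uw by (auto simp: splice_def class_fibre_def)
qed

lemma sum_class_fibre_eq:
  assumes C: "C \<in> cliques E" and x: "x \<in> configs Xs" and x': "x' \<in> configs Xs"
    and agree: "\<forall>j\<in>C. g j (x j) = g j (x' j)"
  shows "sum (psi C) (class_fibre C x) = sum (psi C) (class_fibre C x')"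
proof (rule sum.reindex_bij_witness[where i = "splice C x" and j = "splice C x'"])
  have agree': "\<forall>j\<in>C. g j (x' j) = g j (x j)" using agree by simp
  fix v assume v: "v \<in> class_fibre C x"
  show "splice C x (splice C x' v) = v" using v by (auto simp: splice_def class_fibre_def)
  show "splice C x' v \<in> class_fibre C x'" using x' v agree' by (rule splice_mem_class_fibre)
  show "psi C (splice C x' v) = psi C v" using C x' v agree' by (rule psi_splice)
next
  fix v assume v: "v \<in> class_fibre C x'"
  show "splice C x' (splice C x v) = v" using v by (auto simp: splice_def class_fibre_def)
  show "splice C x v \<in> class_fibre C x" using x v agree by (rule splice_mem_class_fibre)
qed

lemma class_potential_eq:
  assumes C: "C \<in> cliques E" and x: "x \<in> configs Xs" and x': "x' \<in> configs Xs"
    and agree: "\<forall>j\<in>C. g j (x j) = g j (x' j)"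
  shows "class_potential C x = class_potential C x'"
proof (cases "C \<in> range Cp")
  case True
  then show ?thesis using sum_class_fibre_eq[OF assms] by (simp add: class_potential_def)
next
  case False
  then have "psi C x = psi C x'"
    using agree by (intro psi_eq_if_coarsely_equal[OF C x x']) auto
  then show ?thesis using False by (simp add: class_potential_def)
qed

lemma induced_potential_gmap:
  assumes C: "C \<in> cliques E" and x: "x \<in> configs Xs"
  shows "induced_potential C (gmap g x) = class_potential C x"
proof -
  let ?x0 = "inv_into (configs Xs) (gmap g) (gmap g x)"
  have x0: "?x0 \<in> configs Xs" by (rule inv_into_into[OF imageI[OF x]])
  have "gmap g ?x0 = gmap g x" by (rule f_inv_into_f[OF imageI[OF x]])
  then have "\<forall>j\<in>C. g j (?x0 j) = g j (x j)" by (simp add: gmap_def fun_eq_iff)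
  then show ?thesis unfolding induced_potential_def by (rule class_potential_eq[OF C x0 x])
qed

lemma induced_potential_local:
  assumes C: "C \<in> cliques E" and z: "z \<in> gmap g ` configs Xs" and z': "z' \<in> gmap g ` configs Xs"
    and agree: "\<forall>j\<in>C. z j = z' j"
  shows "induced_potential C z = induced_potential C z'"
proof -
  obtain x x' where x: "x \<in> configs Xs" "z = gmap g x" and x': "x' \<in> configs Xs" "z' = gmap g x'"
    using z z' by blast
  have "\<forall>j\<in>C. g j (x j) = g j (x' j)" using agree x x' by (simp add: gmap_def)
  then show ?thesis
    using class_potential_eq[OF C x(1) x'(1)] x x' by (simp add: induced_potential_gmap[OF C])
qed

lemma bij_betw_fibre_PiE:
  assumes x: "x \<in> configs Xs"
  shows "bij_betw (\<lambda>x'. \<lambda>C\<in>range Cp. splice C x x')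
           {x' \<in> configs Xs. gmap g x' = gmap g x} (PiE (range Cp) (\<lambda>C. class_fibre C x))"
proof (rule bij_betw_byWitness[where f' = "\<lambda>f j. f (Cp j) j"])
  have component: "f (Cp j) \<in> class_fibre (Cp j) x" if "f \<in> PiE (range Cp) (\<lambda>C. class_fibre C x)" for f j
    by (rule PiE_mem[OF that rangeI])
  show "\<forall>f\<in>PiE (range Cp) (\<lambda>C. class_fibre C x). (\<lambda>C\<in>range Cp. splice C x (\<lambda>j. f (Cp j) j)) = f"
  proof
    fix f assume f: "f \<in> PiE (range Cp) (\<lambda>C. class_fibre C x)"
    show "(\<lambda>C\<in>range Cp. splice C x (\<lambda>j. f (Cp j) j)) = f"
    proof
      fix C show "(\<lambda>C\<in>range Cp. splice C x (\<lambda>j. f (Cp j) j)) C = f C"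
      proof (cases "C \<in> range Cp")
        case True
        then have "f C \<in> class_fibre C x" using component[OF f] by blast
        then have "splice C x (\<lambda>j. f (Cp j) j) = f C"
          by (auto simp: splice_def class_fibre_def)
        then show ?thesis using True by simp
      next
        case False
        then show ?thesis using PiE_arb[OF f False] by simp
      qed
    qed
  qed
  show "(\<lambda>f j. f (Cp j) j) ` PiE (range Cp) (\<lambda>C. class_fibre C x) \<subseteq> {x' \<in> configs Xs. gmap g x' = gmap g x}"
  proof (rule image_subsetI)
    fix f assume f: "f \<in> PiE (range Cp) (\<lambda>C. class_fibre C x)"
    have "f (Cp j) j \<in> Xs j \<and> g j (f (Cp j) j) = g j (x j)" for j
      using component[OF f, of j] by (simp add: class_fibre_def configs_def)
    then show "(\<lambda>j. f (Cp j) j) \<in> {x' \<in> configs Xs. gmap g x' = gmap g x}"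
      by (simp add: configs_def gmap_def)
  qed
  show "\<forall>x'\<in>{x' \<in> configs Xs. gmap g x' = gmap g x}. (\<lambda>j. (\<lambda>C\<in>range Cp. splice C x x') (Cp j) j) = x'"
    by (simp add: splice_def)
  show "(\<lambda>x'. \<lambda>C\<in>range Cp. splice C x x') ` {x' \<in> configs Xs. gmap g x' = gmap g x}
          \<subseteq> PiE (range Cp) (\<lambda>C. class_fibre C x)"
  proof (rule image_subsetI)
    fix x' assume "x' \<in> {x' \<in> configs Xs. gmap g x' = gmap g x}"
    then have "x' \<in> configs Xs" "\<forall>j. g j (x j) = g j (x' j)" by (simp_all add: gmap_def fun_eq_iff)
    then have "splice C x x' \<in> class_fibre C x" for C
      using x self_mem_class_fibre by (blast intro: splice_mem_class_fibre)
    then show "(\<lambda>C\<in>range Cp. splice C x x') \<in> PiE (range Cp) (\<lambda>C. class_fibre C x)"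
      by simp
  qed
qed

lemma sum_fibre_prod_psi:
  assumes x: "x \<in> configs Xs"
  shows "(\<Sum>x'\<in>{x' \<in> configs Xs. gmap g x' = gmap g x}. \<Prod>C\<in>cliques E. psi C x')
       = (\<Prod>C\<in>cliques E. class_potential C x)"
proof -
  let ?F = "{x' \<in> configs Xs. gmap g x' = gmap g x}"
  let ?O = "cliques E - range Cp"
  have split: "(\<Prod>C\<in>cliques E. h C) = (\<Prod>C\<in>?O. h C) * (\<Prod>C\<in>range Cp. h C)" for h :: "'v set \<Rightarrow> real"
    by (rule prod.subset_diff) (use Cp_clique in auto)
  have agree: "\<forall>j. g j (x j) = g j (x' j)" if "x' \<in> ?F" for x'
    using that by (simp add: gmap_def fun_eq_iff)
  have other: "psi C x' = class_potential C x" if x': "x' \<in> ?F" and C: "C \<in> ?O" for x' C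
  proof -
    have "psi C x' = psi C x"
      using C agree[OF x'] by (intro psi_eq_if_coarsely_equal) (use x' x in auto)
    then show ?thesis using C by (simp add: class_potential_def)
  qed
  have classwise: "psi C (splice C x x') = psi C x'" if x': "x' \<in> ?F" and C: "C \<in> range Cp" for x' C
  proof (rule psi_splice)
    show "C \<in> cliques E" using C Cp_clique by auto
    show "x' \<in> class_fibre C x'" using x' by (simp add: self_mem_class_fibre)
  qed (use x agree[OF x'] in auto)
  have "(\<Sum>x'\<in>?F. \<Prod>C\<in>cliques E. psi C x')
      = (\<Sum>x'\<in>?F. (\<Prod>C\<in>?O. class_potential C x) * (\<Prod>C\<in>range Cp. psi C (splice C x x')))"
    unfolding split using other classwise by (intro sum.cong prod.cong arg_cong2[where f = "(*)"]) auto
  also have "\<dots> = (\<Prod>C\<in>?O. class_potential C x) * (\<Sum>x'\<in>?F. \<Prod>C\<in>range Cp. psi C (splice C x x'))"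
    by (simp add: sum_distrib_left)
  also have "(\<Sum>x'\<in>?F. \<Prod>C\<in>range Cp. psi C (splice C x x'))
      = (\<Sum>f\<in>PiE (range Cp) (\<lambda>C. class_fibre C x). \<Prod>C\<in>range Cp. psi C (f C))"
    using sum.reindex_bij_betw[OF bij_betw_fibre_PiE[OF x], of "\<lambda>f. \<Prod>C\<in>range Cp. psi C (f C)"]
    by simp
  also have "\<dots> = (\<Prod>C\<in>range Cp. \<Sum>v\<in>class_fibre C x. psi C v)"
    by (rule prod_sum_PiE[symmetric]) (use finite_configs_Xs in \<open>auto simp: class_fibre_def\<close>)
  also have "\<dots> = (\<Prod>C\<in>range Cp. class_potential C x)"
    by (simp add: class_potential_def)
  finally show ?thesis by (simp add: split[of "\<lambda>C. class_potential C x"])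
qed

lemma pmf_Y_gmap:
  assumes gibbs: "\<And>x. x \<in> configs Xs \<Longrightarrow> p x = (\<Prod>C\<in>cliques E. psi C x) / Z"
    and x: "x \<in> configs Xs"
  shows "pmf_Y Xs g p (gmap g x) = (\<Prod>C\<in>cliques E. induced_potential C (gmap g x)) / Z"
proof -
  have "pmf_Y Xs g p (gmap g x)
      = (\<Sum>x'\<in>{x' \<in> configs Xs. gmap g x' = gmap g x}. \<Prod>C\<in>cliques E. psi C x') / Z"
    unfolding pmf_Y_eq_sum[OF finite_configs_Xs] sum_divide_distrib by (rule sum.cong) (simp_all add: gibbs)
  also have "\<dots> = (\<Prod>C\<in>cliques E. induced_potential C (gmap g x)) / Z"
    by (simp add: sum_fibre_prod_psi[OF x] induced_potential_gmap[OF _ x])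
  finally show ?thesis .
qed

lemma law_Y_is_MRF:
  assumes irrefl: "\<And>i. \<not> E i i"
    and pos: "\<And>x. x \<in> configs Xs \<Longrightarrow> p x > 0"
    and gibbs: "\<And>x. x \<in> configs Xs \<Longrightarrow> p x = (\<Prod>C\<in>cliques E. psi C x) / Z"
  shows "is_MRF E (law_Y Xs g p)"
proof -
  let ?Ys = "\<lambda>j. g j ` Xs j"
  have law: "law_Y Xs g p = (\<lambda>P. sum (pmf_Y Xs g p) {y \<in> configs ?Ys. P y})"
    by (simp add: fun_eq_iff law_Y_eq_sum_pmf_Y[OF finite_configs_Xs] gmap_image_configs)
  show ?thesis
    unfolding law
  proof (rule gibbs_field_is_MRF[where U = induced_potential and Z = Z])
    show "\<And>j. finite (?Ys j)" using finite_Xs by simp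
    show "pmf_Y Xs g p y > 0" if "y \<in> configs ?Ys" for y
      using that pos finite_configs_Xs by (intro pmf_Y_pos) (auto simp: gmap_image_configs)
    show "pmf_Y Xs g p y = (\<Prod>C\<in>cliques E. induced_potential C y) / Z" if "y \<in> configs ?Ys" for y
      using that pmf_Y_gmap[OF gibbs] by (auto simp: gmap_image_configs[symmetric])
    show "induced_potential C y = induced_potential C y'"
      if "C \<in> cliques E" "y \<in> configs ?Ys" "y' \<in> configs ?Ys" "\<forall>j\<in>C. y j = y' j" for C y y'
      using that by (intro induced_potential_local) (auto simp: gmap_image_configs)
  qed (rule irrefl)
qed

end

theorem proposition1:
  fixes E :: "'v::finite \<Rightarrow> 'v \<Rightarrow> bool"
    and Xs :: "'v \<Rightarrow> 'a set"
    and g :: "'v \<Rightarrow> 'a \<Rightarrow> 'b"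
    and p :: "('v \<Rightarrow> 'a) \<Rightarrow> real"
    and psi :: "'v set \<Rightarrow> ('v \<Rightarrow> 'a) \<Rightarrow> real"
    and Z :: real
    and Cp :: "'v \<Rightarrow> 'v set"
  assumes sym: "\<And>i j. E i j \<Longrightarrow> E j i"
    and irrefl: "\<And>i. \<not> E i i"
    and fin: "\<And>i. finite (Xs i)"
    and psi_local: "\<And>C x x'. C \<in> cliques E \<Longrightarrow> x \<in> configs Xs \<Longrightarrow> x' \<in> configs Xs \<Longrightarrow>
                      (\<forall>j\<in>C. x j = x' j) \<Longrightarrow> psi C x = psi C x'"
    and pos: "\<And>x. x \<in> configs Xs \<Longrightarrow> p x > 0"
    and Z_def: "Z = (\<Sum>x\<in>configs Xs. \<Prod>C\<in>cliques E. psi C x)"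
    and gibbs: "\<And>x. x \<in> configs Xs \<Longrightarrow> p x = (\<Prod>C\<in>cliques E. psi C x) / Z"
    and at_most_one: "\<And>i C1 C2. C1 \<in> cliques E \<Longrightarrow> C2 \<in> cliques E \<Longrightarrow> i \<in> C1 \<Longrightarrow> i \<in> C2 \<Longrightarrow>
                        strictly_depends Xs g (psi C1) i \<Longrightarrow> strictly_depends Xs g (psi C2) i \<Longrightarrow> C1 = C2"
    and Cp_clique: "\<And>i. Cp i \<in> cliques E \<and> i \<in> Cp i"
    and Cp_strict: "\<And>i C. C \<in> cliques E \<Longrightarrow> i \<in> C \<Longrightarrow> strictly_depends Xs g (psi C) i \<Longrightarrow> Cp i = C"
  shows "is_MRF E (law_Y Xs g p) \<and>
    (\<exists>U :: 'v set \<Rightarrow> ('v \<Rightarrow> 'b) \<Rightarrow> real.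
       (\<forall>i. \<forall>x\<in>configs Xs.
          U (Cp i) (gmap g x) =
            (\<Sum>x''\<in>{x''\<in>configs Xs. (\<forall>j. Cp j \<noteq> Cp i \<longrightarrow> x'' j = x j) \<and>
                                    (\<forall>j. Cp j = Cp i \<longrightarrow> g j (x'' j) = g j (x j))}.
               psi (Cp i) x'')) \<and>
       (\<forall>C\<in>cliques E - range Cp. \<forall>x\<in>configs Xs. U C (gmap g x) = psi C x) \<and>
       (\<forall>y\<in>gmap g ` configs Xs. pmf_Y Xs g p y = (\<Prod>C\<in>cliques E. U C y) / Z))"
proof -
  interpret coarse_potentials E Xs g psi Cp
    by unfold_locales (fact fin psi_local Cp_clique Cp_strict)+
  show ?thesis
    using law_Y_is_MRF[OF irrefl pos gibbs] pmf_Y_gmap[OF gibbs] Cp_clique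
    by (intro conjI exI[of _ induced_potential])
       (auto simp: induced_potential_gmap class_potential_def class_fibre_def)
qed

end
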